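(* Let $\mathbf{o}_1,\dots,\mathbf{o}_Q\in\mathbb{R}^2$ be fixed, $\mathbf{x},\mathbf{v}\in\mathbb{R}^2$ with $\mathbf{v}\neq\mathbf{0}$, and suppose $\mathbf{x}+t\mathbf{v}\neq\mathbf{o}_q$ for all $t\ge1$ and all $q$. Let $\bm{l}_q=\mathbf{x}-\mathbf{o}_q$, $\mathbf{d}_{t,q}=\bm{l}_q+t\mathbf{v}$, $d_{t,q}=\|\mathbf{d}_{t,q}\|$, $s_{T,q}^{(n)}=\sum_{t=1}^T t^n/d_{t,q}^4$, $\mathbf{P}_v^\perp=\mathbf{I}-\mathbf{v}\mathbf{v}^{\mathrm T}/\|\mathbf{v}\|^2$, and $$\mathbf{A}_{T,v}=\sum_{q=1}^Q\Big[s_{T,q}^{(2)}(\bm{l}_q^{\mathrm T}\bm{l}_q\mathbf{I}-\bm{l}_q\bm{l}_q^{\mathrm T})+s_{T,q}^{(3)}(2\mathbf{v}^{\mathrm T}\bm{l}_q\mathbf{I}-\bm{l}_q\mathbf{v}^{\mathrm T}-\mathbf{v}\bm{l}_q^{\mathrm T})+s_{T,q}^{(4)}(\|\mathbf{v}\|^2\mathbf{I}-\mathbf{v}\mathbf{v}^{\mathrm T})\Big].$$ Then, as $T\to\infty$, $\lambda_{\min}(\mathbf{A}_{T,v})-\sum_{q=1}^Q s_{T,q}^{(2)}\|\mathbf{P}_v^\perp\bm{l}_q\|^2\to0$ and $\lambda_{\max}(\mathbf{A}_{T,v})\big/\big(\sum_{q=1}^Q s_{T,q}^{(4)}\|\mathbf{v}\|^2\big)\to1$.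 *)

theory Defs
  imports "HOL-Analysis.Analysis"
begin

definition outer :: "real^'n \<Rightarrow> real^'m \<Rightarrow> real^'m^'n" where
  "outer a b = (\<chi> i j. a $ i * b $ j)"

definition real_eigenvalues :: "real^'n^'n \<Rightarrow> real set" where
  "real_eigenvalues M = {m. \<exists>y. y \<noteq> 0 \<and> M *v y = scaleR m y}"

definition lambda_min :: "real^'n^'n \<Rightarrow> real" where
  "lambda_min M = Min (real_eigenvalues M)"

definition lambda_max :: "real^'n^'n \<Rightarrow> real" where
  "lambda_max M = Max (real_eigenvalues M)"

end

theory Submission
  imports Defs "HOL-Library.Quadratic_Discriminant" "HOL-Real_Asymp.Real_Asymp"
begin

text \<open>
  The distances \<open>d\<^sub>t\<^sub>,\<^sub>q\<close> grow linearly in \<open>t\<close>, so the moment sums \<open>s(2)\<close>, \<open>s(3)\<close>, \<open>s(4)\<close>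
  are \<open>O(1)\<close>, \<open>O(log T)\<close> and of exact order \<open>T\<close>. In the orthogonal frame \<open>(v, v\<^sup>\<bottom>)\<close> the
  symmetric matrix \<open>A\<^sub>T\<close> has diagonal entries \<open>\<alpha> = \<Sum> s(2) \<parallel>P\<^sup>\<bottom> l\<parallel>\<^sup>2\<close> and
  \<open>\<gamma> = S + O(log T)\<close>, where \<open>S = \<parallel>v\<parallel>\<^sup>2 \<Sum> s(4)\<close>, and off-diagonal entry \<open>\<beta> = O(log T)\<close>.
  Its eigenvalues are \<open>(\<alpha> + \<gamma> \<mp> sqrt ((\<alpha> - \<gamma>)\<^sup>2 + 4 \<beta>\<^sup>2)) / 2\<close>. Since the gap \<open>\<gamma> - \<alpha>\<close> is of
  order \<open>S\<close> while \<open>\<beta>\<^sup>2 = o(S)\<close>, the smaller one is \<open>\<alpha> + O(\<beta>\<^sup>2 / S) = \<alpha> + o(1)\<close> and the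
  larger one is \<open>\<gamma> + o(1) = S (1 + o(1))\<close>.
\<close>

lemma real_eigenvalues_iff_det:
  fixes M :: "real^'n^'n"
  shows "m \<in> real_eigenvalues M \<longleftrightarrow> det (M - m *\<^sub>R mat 1) = 0"
proof -
  have "(M - m *\<^sub>R mat 1) *v y = M *v y - m *\<^sub>R y" for y
    by (simp add: matrix_vector_mult_diff_rdistrib scaleR_matrix_vector_assoc[symmetric])
  moreover have "det (M - m *\<^sub>R mat 1) = 0 \<longleftrightarrow> (\<exists>y. y \<noteq> 0 \<and> (M - m *\<^sub>R mat 1) *v y = 0)"
    by (metis invertible_det_nz invertible_left_inverse matrix_left_invertible_ker)
  ultimately show ?thesis
    unfolding real_eigenvalues_def by simp
qed

lemma det_sub_scalar_2x2:
  fixes M :: "real^2^2"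
  shows "det (M - m *\<^sub>R mat 1) = m\<^sup>2 - trace M * m + det M"
  by (simp add: det_2 trace_def UNIV_2 mat_def algebra_simps power2_eq_square)

definition rot90 :: "real^2 \<Rightarrow> real^2" where
  "rot90 v = vector [- v$2, v$1]"

lemma inner_rot90_self: "v \<bullet> rot90 v = 0"
  by (simp add: rot90_def inner_vec_def sum_2)

lemma inner_rot90_rot90: "rot90 u \<bullet> rot90 v = u \<bullet> v"
  by (simp add: rot90_def inner_vec_def sum_2)

lemma inner_square_decompose_2:
  "(l \<bullet> l) * (v \<bullet> v) = (l \<bullet> v)\<^sup>2 + (l \<bullet> rot90 v)\<^sup>2"
  by (simp add: rot90_def inner_vec_def sum_2 algebra_simps power2_eq_square)

lemma symmetric_2x2_trace_det_in_basis:
  fixes M :: "real^2^2"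
  assumes sym: "M$1$2 = M$2$1" and "v \<noteq> 0"
  defines "w \<equiv> rot90 v"
  shows "trace M = (v \<bullet> (M *v v) + w \<bullet> (M *v w)) / (v \<bullet> v)"
    and "det M = ((v \<bullet> (M *v v)) * (w \<bullet> (M *v w)) - (v \<bullet> (M *v w))\<^sup>2) / (v \<bullet> v)\<^sup>2"
proof -
  have n: "v \<bullet> v \<noteq> 0"
    using \<open>v \<noteq> 0\<close> by simp
  have "trace M * (v \<bullet> v) = v \<bullet> (M *v v) + w \<bullet> (M *v w)"
    unfolding w_def rot90_def
    by (simp add: trace_def UNIV_2 inner_vec_def sum_2 matrix_vector_mult_def algebra_simps)
  then show "trace M = (v \<bullet> (M *v v) + w \<bullet> (M *v w)) / (v \<bullet> v)"
    using n by (simp add: eq_divide_eq)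
  have "det M * (v \<bullet> v)\<^sup>2 = (v \<bullet> (M *v v)) * (w \<bullet> (M *v w)) - (v \<bullet> (M *v w))\<^sup>2"
    using sym unfolding w_def rot90_def
    by (simp add: det_2 inner_vec_def sum_2 matrix_vector_mult_def power2_eq_square algebra_simps)
  then show "det M = ((v \<bullet> (M *v v)) * (w \<bullet> (M *v w)) - (v \<bullet> (M *v w))\<^sup>2) / (v \<bullet> v)\<^sup>2"
    using n by (simp add: eq_divide_eq)
qed

lemma lambda_min_max_symmetric_2x2:
  fixes M :: "real^2^2"
  assumes sym: "M$1$2 = M$2$1" and "v \<noteq> 0"
  defines "w \<equiv> rot90 v"
  defines "\<alpha> \<equiv> v \<bullet> (M *v v) / (v \<bullet> v)" and "\<beta> \<equiv> v \<bullet> (M *v w) / (v \<bullet> v)"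
    and "\<gamma> \<equiv> w \<bullet> (M *v w) / (v \<bullet> v)"
  defines "r \<equiv> sqrt ((\<alpha> - \<gamma>)\<^sup>2 + 4 * \<beta>\<^sup>2)"
  shows "lambda_min M = (\<alpha> + \<gamma> - r) / 2"
    and "lambda_max M = (\<alpha> + \<gamma> + r) / 2"
proof -
  have tr: "trace M = \<alpha> + \<gamma>"
    using symmetric_2x2_trace_det_in_basis(1)[OF sym \<open>v \<noteq> 0\<close>]
    unfolding \<alpha>_def \<gamma>_def w_def by (simp add: add_divide_distrib)
  have det: "det M = \<alpha> * \<gamma> - \<beta>\<^sup>2"
    using symmetric_2x2_trace_det_in_basis(2)[OF sym \<open>v \<noteq> 0\<close>]
    unfolding \<alpha>_def \<beta>_def \<gamma>_def w_def by (simp add: diff_divide_distrib power_divide power2_eq_square)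
  have discrim: "discrim 1 (- (\<alpha> + \<gamma>)) (\<alpha> * \<gamma> - \<beta>\<^sup>2) = (\<alpha> - \<gamma>)\<^sup>2 + 4 * \<beta>\<^sup>2"
    unfolding discrim_def by (simp add: power2_eq_square algebra_simps)
  have "m \<in> real_eigenvalues M \<longleftrightarrow> 1 * m\<^sup>2 + - (\<alpha> + \<gamma>) * m + (\<alpha> * \<gamma> - \<beta>\<^sup>2) = 0" for m
    unfolding real_eigenvalues_iff_det det_sub_scalar_2x2 tr det by (simp add: algebra_simps)
  also have "\<dots> m \<longleftrightarrow> m = (\<alpha> + \<gamma> + r) / 2 \<or> m = (\<alpha> + \<gamma> - r) / 2" for m
    unfolding discriminant_iff[OF one_neq_zero] discrim r_def by (simp add: add.commute)
  finally have eigenvalues: "real_eigenvalues M = {(\<alpha> + \<gamma> - r) / 2, (\<alpha> + \<gamma> + r) / 2}"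
    by blast
  have "(\<alpha> + \<gamma> - r) / 2 \<le> (\<alpha> + \<gamma> + r) / 2"
    by (simp add: r_def)
  then show "lambda_min M = (\<alpha> + \<gamma> - r) / 2" and "lambda_max M = (\<alpha> + \<gamma> + r) / 2"
    unfolding lambda_min_def lambda_max_def eigenvalues by (simp_all add: min_def max_def)
qed

lemma outer_mult_vector: "outer a b *v y = (b \<bullet> y) *\<^sub>R a"
  by (simp add: vec_eq_iff outer_def matrix_vector_mult_def inner_vec_def sum_distrib_left mult_ac)

lemma inner_sum_matrix_vector:
  fixes B :: "'i \<Rightarrow> real^'n^'m"
  shows "x \<bullet> ((\<Sum>i\<in>I. B i) *v y) = (\<Sum>i\<in>I. x \<bullet> (B i *v y))"
  by (simp add: matrix_vector_mult_def inner_vec_def sum_distrib_right sum_distrib_left mult_ac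
      sum.swap[of _ I])

definition info_block :: "real \<Rightarrow> real \<Rightarrow> real \<Rightarrow> real^'n \<Rightarrow> real^'n \<Rightarrow> real^'n^'n" where
  "info_block c2 c3 c4 l v =
     c2 *\<^sub>R ((l \<bullet> l) *\<^sub>R mat 1 - outer l l)
   + c3 *\<^sub>R ((2 * (v \<bullet> l)) *\<^sub>R mat 1 - outer l v - outer v l)
   + c4 *\<^sub>R ((norm v)\<^sup>2 *\<^sub>R mat 1 - outer v v)"

lemma info_block_symmetric: "info_block c2 c3 c4 l v $ i $ j = info_block c2 c3 c4 l v $ j $ i"
  by (simp add: info_block_def outer_def mat_def algebra_simps)

lemma inner_info_block:
  "x \<bullet> (info_block c2 c3 c4 l v *v y) =
     c2 * ((l \<bullet> l) * (x \<bullet> y) - (l \<bullet> y) * (x \<bullet> l))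
   + c3 * (2 * (v \<bullet> l) * (x \<bullet> y) - (v \<bullet> y) * (x \<bullet> l) - (l \<bullet> y) * (x \<bullet> v))
   + c4 * ((v \<bullet> v) * (x \<bullet> y) - (v \<bullet> y) * (x \<bullet> v))"
  by (simp add: info_block_def matrix_vector_mult_add_rdistrib matrix_vector_mult_diff_rdistrib
      scaleR_matrix_vector_assoc[symmetric] outer_mult_vector inner_add_right inner_diff_right
      power2_norm_eq_inner algebra_simps)

lemma info_block_forms_2:
  fixes l v :: "real^2" and c2 c3 c4 :: real
  defines "B \<equiv> info_block c2 c3 c4 l v" and "w \<equiv> rot90 v"
  shows "v \<bullet> (B *v v) = c2 * (l \<bullet> w)\<^sup>2"
    and "v \<bullet> (B *v w) = c2 * (- (l \<bullet> v) * (l \<bullet> w)) + c3 * (- (v \<bullet> v) * (l \<bullet> w))"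
    and "w \<bullet> (B *v w) = c2 * (l \<bullet> v)\<^sup>2 + c3 * (2 * (l \<bullet> v) * (v \<bullet> v)) + c4 * (v \<bullet> v)\<^sup>2"
  using inner_square_decompose_2[of l v]
  by (simp_all add: B_def w_def inner_info_block inner_rot90_self inner_rot90_rot90 inner_commute
      power2_eq_square algebra_simps)

lemma norm_perp_projection_2:
  fixes v y :: "real^2"
  assumes "v \<noteq> 0"
  shows "(norm ((mat 1 - (1 / (norm v)\<^sup>2) *\<^sub>R outer v v) *v y))\<^sup>2 = (y \<bullet> rot90 v)\<^sup>2 / (v \<bullet> v)"
proof -
  have n: "v \<bullet> v > 0"
    using assms by simp
  have "(mat 1 - (1 / (norm v)\<^sup>2) *\<^sub>R outer v v) *v y = y - ((v \<bullet> y) / (v \<bullet> v)) *\<^sub>R v"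
    by (simp add: matrix_vector_mult_diff_rdistrib scaleR_matrix_vector_assoc[symmetric]
        outer_mult_vector power2_norm_eq_inner)
  moreover have "(norm (y - ((v \<bullet> y) / (v \<bullet> v)) *\<^sub>R v))\<^sup>2 = ((y \<bullet> y) * (v \<bullet> v) - (v \<bullet> y)\<^sup>2) / (v \<bullet> v)"
    unfolding power2_norm_eq_inner using n
    by (simp add: inner_diff_left inner_diff_right inner_commute field_simps power2_eq_square)
  ultimately show ?thesis
    using inner_square_decompose_2[of y v] by (simp add: inner_commute)
qed

definition moment_sum :: "'a::real_normed_vector \<Rightarrow> 'a \<Rightarrow> nat \<Rightarrow> nat \<Rightarrow> real" where
  "moment_sum l v n T = (\<Sum>t=1..T. real t ^ n / (norm (l + real t *\<^sub>R v)) ^ 4)"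

lemma moment_sum_nonneg: "0 \<le> moment_sum l v n T"
  unfolding moment_sum_def by (intro sum_nonneg) auto

lemma norm_ray_ge_linear:
  fixes l v :: "'a::real_normed_vector"
  assumes v: "v \<noteq> 0" and ray: "\<And>t::nat. t \<ge> 1 \<Longrightarrow> l + real t *\<^sub>R v \<noteq> 0"
  obtains c where "c > 0" "\<And>t::nat. t \<ge> 1 \<Longrightarrow> c * real t \<le> norm (l + real t *\<^sub>R v)"
proof -
  define N where "N = nat \<lceil>2 * norm l / norm v\<rceil>"
  define c where "c = Min (insert (norm v / 2) ((\<lambda>t. norm (l + real t *\<^sub>R v) / real t) ` {1..N}))"
  have "c > 0"
    unfolding c_def using v ray by (subst Min_gr_iff) auto
  moreover have "c * real t \<le> norm (l + real t *\<^sub>R v)" if t: "t \<ge> 1" for t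
  proof (cases "t \<le> N")
    case True
    then have "c \<le> norm (l + real t *\<^sub>R v) / real t"
      unfolding c_def using t by (intro Min_le) auto
    then show ?thesis
      using t by (simp add: field_simps)
  next
    case False
    then have "2 * norm l / norm v \<le> real t"
      using of_nat_ceiling[of "2 * norm l / norm v"] unfolding N_def by linarith
    then have "2 * norm l \<le> real t * norm v"
      using v by (simp add: pos_divide_le_eq)
    moreover have "c \<le> norm v / 2"
      unfolding c_def by (intro Min_le) auto
    then have "c * real t \<le> real t * norm v / 2"
      using mult_right_mono[of c "norm v / 2" "real t"] by (simp add: mult.commute)
    moreover have "real t * norm v - norm l \<le> norm (l + real t *\<^sub>R v)"
      using norm_diff_ineq[of "real t *\<^sub>R v" l] by (simp add: add.commute)
    ultimately show ?thesis
      by linarith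
  qed
  ultimately show ?thesis
    using that by blast
qed

lemma moment_sum_le:
  assumes c: "c > 0" and lin: "\<And>t::nat. t \<ge> 1 \<Longrightarrow> c * real t \<le> norm (l + real t *\<^sub>R v)"
    and "n \<le> 4"
  shows "moment_sum l v n T \<le> (\<Sum>t=1..T. inverse (real t ^ (4 - n))) / c ^ 4"
  unfolding moment_sum_def sum_divide_distrib
proof (rule sum_mono)
  fix t assume "t \<in> {1..T}"
  then have t: "real t \<ge> 1" and ct: "c * real t \<le> norm (l + real t *\<^sub>R v)"
    using lin by auto
  have ct_pos: "c * real t > 0"
    using c t by simp
  have d: "norm (l + real t *\<^sub>R v) > 0"
    using ct ct_pos by linarith
  have "real t ^ n / (norm (l + real t *\<^sub>R v)) ^ 4 \<le> real t ^ n / (c * real t) ^ 4"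
  proof (rule divide_left_mono)
    show "(c * real t) ^ 4 \<le> (norm (l + real t *\<^sub>R v)) ^ 4"
      using ct ct_pos by (intro power_mono) auto
    show "0 < (norm (l + real t *\<^sub>R v)) ^ 4 * (c * real t) ^ 4"
      using d ct_pos by (metis mult_pos_pos zero_less_power)
  qed simp
  also have "\<dots> = inverse (real t ^ (4 - n)) / c ^ 4"
    using \<open>n \<le> 4\<close> c t by (simp add: power_mult_distrib field_simps flip: power_add)
  finally show "real t ^ n / (norm (l + real t *\<^sub>R v)) ^ 4 \<le> inverse (real t ^ (4 - n)) / c ^ 4" .
qed

lemma moment_sum_4_ge:
  assumes ray: "\<And>t::nat. t \<ge> 1 \<Longrightarrow> l + real t *\<^sub>R v \<noteq> 0"
  shows "real T / (norm l + norm v) ^ 4 \<le> moment_sum l v 4 T"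
proof -
  have "1 / (norm l + norm v) ^ 4 \<le> real t ^ 4 / (norm (l + real t *\<^sub>R v)) ^ 4" if t: "t \<ge> 1" for t
  proof -
    have d: "norm (l + real t *\<^sub>R v) > 0"
      using ray t by simp
    have "norm (l + real t *\<^sub>R v) \<le> norm l + real t * norm v"
      using norm_triangle_ineq[of l "real t *\<^sub>R v"] by simp
    also have "\<dots> \<le> real t * (norm l + norm v)"
      using t mult_right_mono[of 1 "real t" "norm l"] by (simp add: algebra_simps)
    finally have le: "norm (l + real t *\<^sub>R v) \<le> real t * (norm l + norm v)" .
    have "1 / (norm l + norm v) ^ 4 = real t ^ 4 / (real t * (norm l + norm v)) ^ 4"
      using t by (simp add: power_mult_distrib)
    also have "\<dots> \<le> real t ^ 4 / (norm (l + real t *\<^sub>R v)) ^ 4"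
    proof (rule divide_left_mono)
      have "0 < real t * (norm l + norm v)"
        using le d by linarith
      then show "0 < (real t * (norm l + norm v)) ^ 4 * (norm (l + real t *\<^sub>R v)) ^ 4"
        using d by (metis mult_pos_pos zero_less_power)
      show "(norm (l + real t *\<^sub>R v)) ^ 4 \<le> (real t * (norm l + norm v)) ^ 4"
        using le by (intro power_mono) auto
    qed simp
    finally show ?thesis .
  qed
  then have "(\<Sum>t=1..T. 1 / (norm l + norm v) ^ 4) \<le> moment_sum l v 4 T"
    unfolding moment_sum_def by (intro sum_mono) auto
  then show ?thesis
    by simp
qed

lemma harm_bigo_ln: "(harm :: nat \<Rightarrow> real) \<in> O(\<lambda>n. ln n)"
proof -
  have "(\<lambda>n. harm n - ln (real n)) \<in> O(\<lambda>_. 1)"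
    using euler_mascheroni_LIMSEQ by (intro bigoI_tendsto[where c = euler_mascheroni]) auto
  also have "(\<lambda>_. 1) \<in> O(\<lambda>n. ln (real n))"
    by real_asymp
  finally have "(\<lambda>n. (harm n - ln (real n)) + ln (real n)) \<in> O(\<lambda>n. ln (real n))"
    by (rule sum_in_bigo(1)) simp
  then show ?thesis
    by simp
qed

lemma moment_sum_2_bigo:
  fixes l v :: "'a::real_normed_vector"
  assumes "v \<noteq> 0" "\<And>t::nat. t \<ge> 1 \<Longrightarrow> l + real t *\<^sub>R v \<noteq> 0"
  shows "moment_sum l v 2 \<in> O(\<lambda>_. 1)"
proof -
  obtain c where c: "c > 0" "\<And>t::nat. t \<ge> 1 \<Longrightarrow> c * real t \<le> norm (l + real t *\<^sub>R v)"
    using norm_ray_ge_linear assms by blast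
  have "moment_sum l v 2 T \<le> (\<Sum>t. inverse (real t ^ 2)) / c ^ 4" for T
  proof -
    have "(\<Sum>t=1..T. inverse (real t ^ 2)) \<le> (\<Sum>t. inverse (real t ^ 2))"
      by (rule sum_le_suminf[OF inverse_power_summable]) auto
    then show ?thesis
      using moment_sum_le[OF c, of 2 T] c(1) by (simp add: divide_right_mono order_trans)
  qed
  then show ?thesis
    by (intro bigoI[where c = "(\<Sum>t. inverse (real t ^ 2)) / c ^ 4"]) (auto simp: moment_sum_nonneg)
qed

lemma moment_sum_3_bigo:
  fixes l v :: "'a::real_normed_vector"
  assumes "v \<noteq> 0" "\<And>t::nat. t \<ge> 1 \<Longrightarrow> l + real t *\<^sub>R v \<noteq> 0"
  shows "moment_sum l v 3 \<in> O(\<lambda>T. ln T)"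
proof -
  obtain c where c: "c > 0" "\<And>t::nat. t \<ge> 1 \<Longrightarrow> c * real t \<le> norm (l + real t *\<^sub>R v)"
    using norm_ray_ge_linear assms by blast
  have "moment_sum l v 3 T \<le> 1 / c ^ 4 * harm T" for T
    using moment_sum_le[OF c, of 3 T] by (simp add: harm_def)
  then have "moment_sum l v 3 \<in> O(harm)"
    by (intro bigoI[where c = "1 / c ^ 4"]) (auto simp: moment_sum_nonneg harm_nonneg)
  also note harm_bigo_ln
  finally show ?thesis .
qed

lemma sqrt_add_square_gap_le:
  fixes \<delta> \<beta> :: real
  assumes "\<delta> > 0"
  shows "\<bar>(\<delta> - sqrt (\<delta>\<^sup>2 + 4 * \<beta>\<^sup>2)) / 2\<bar> \<le> \<beta>\<^sup>2 / \<delta>"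
proof -
  define s where "s = sqrt (\<delta>\<^sup>2 + 4 * \<beta>\<^sup>2)"
  define q where "q = \<beta>\<^sup>2 / \<delta>"
  have "\<delta> \<le> s"
    unfolding s_def by (rule real_le_rsqrt) simp
  moreover have "(\<delta> + 2 * q)\<^sup>2 = \<delta>\<^sup>2 + 4 * \<beta>\<^sup>2 + (2 * q)\<^sup>2"
    using assms by (simp add: q_def power2_sum field_simps power2_eq_square)
  then have "s \<le> \<delta> + 2 * q"
    unfolding s_def using assms by (intro real_le_lsqrt) (auto simp: q_def)
  ultimately show ?thesis
    unfolding s_def[symmetric] q_def[symmetric] by (auto simp: abs_if field_simps)
qed

lemma eigenvalue_formula_asymptotics:
  fixes \<alpha> \<beta> \<gamma> S :: "nat \<Rightarrow> real"
  assumes \<alpha>: "\<alpha> \<in> O(\<lambda>T. ln T)" and \<beta>: "\<beta> \<in> O(\<lambda>T. ln T)"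
    and \<gamma>: "(\<lambda>T. \<gamma> T - S T) \<in> O(\<lambda>T. ln T)"
    and S: "(\<lambda>T. real T) \<in> O(S)" "\<forall>\<^sub>F T in sequentially. S T > 0"
  defines "r \<equiv> \<lambda>T. sqrt ((\<alpha> T - \<gamma> T)\<^sup>2 + 4 * (\<beta> T)\<^sup>2)"
  shows "(\<lambda>T. (\<alpha> T + \<gamma> T - r T) / 2 - \<alpha> T) \<longlonglongrightarrow> 0"
    and "(\<lambda>T. (\<alpha> T + \<gamma> T + r T) / 2 / S T) \<longlonglongrightarrow> 1"
proof -
  define f where "f = (\<lambda>T. (\<alpha> T + \<gamma> T - r T) / 2 - \<alpha> T)"
  have ln_small: "(\<lambda>T. ln (real T)) \<in> o(S)"
    using S(1) by (rule landau_o.small_big_trans[rotated]) real_asymp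
  have "(\<lambda>T. \<gamma> T - S T - \<alpha> T) \<in> o(S)"
    using sum_in_bigo(2)[OF \<gamma> \<alpha>] ln_small by (rule landau_o.big_small_trans)
  then have "\<forall>\<^sub>F T in sequentially. norm (\<gamma> T - S T - \<alpha> T) \<le> 1/2 * norm (S T)"
    by (rule landau_o.smallD) simp
  then have gap: "\<forall>\<^sub>F T in sequentially. S T / 2 \<le> \<gamma> T - \<alpha> T"
    using S(2) by eventually_elim (simp add: abs_if split: if_splits)
  have "(\<lambda>T. \<beta> T * \<beta> T) \<in> O(\<lambda>T. ln (real T) * ln (real T))"
    using \<beta> \<beta> by (rule landau_o.big.mult)
  also have "(\<lambda>T. ln (real T) * ln (real T)) \<in> o(\<lambda>T. real T)"
    by real_asymp
  also note S(1)
  finally have "(\<lambda>T. 2 * (\<beta> T * \<beta> T / S T)) \<longlonglongrightarrow> 2 * 0"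
    by (intro tendsto_intros smalloD_tendsto)
  then have "(\<lambda>T. 2 * (\<beta> T)\<^sup>2 / S T) \<longlonglongrightarrow> 0"
    by (simp add: power2_eq_square)
  moreover have "\<forall>\<^sub>F T in sequentially. norm (f T) \<le> 2 * (\<beta> T)\<^sup>2 / S T"
    using gap S(2)
  proof eventually_elim
    case (elim T)
    have "f T = ((\<gamma> T - \<alpha> T) - sqrt ((\<gamma> T - \<alpha> T)\<^sup>2 + 4 * (\<beta> T)\<^sup>2)) / 2"
      by (simp add: f_def r_def power2_commute field_simps)
    moreover have "\<gamma> T - \<alpha> T > 0"
      using elim by simp
    ultimately have "norm (f T) \<le> (\<beta> T)\<^sup>2 / (\<gamma> T - \<alpha> T)"
      using sqrt_add_square_gap_le[of "\<gamma> T - \<alpha> T" "\<beta> T"] by (simp only: real_norm_def)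
    also have "\<dots> \<le> (\<beta> T)\<^sup>2 / (S T / 2)"
      using elim by (intro divide_left_mono) auto
    also have "\<dots> = 2 * (\<beta> T)\<^sup>2 / S T"
      by simp
    finally show ?case .
  qed
  ultimately have f: "f \<longlonglongrightarrow> 0"
    by (rule Lim_null_comparison[rotated])
  then show "(\<lambda>T. (\<alpha> T + \<gamma> T - r T) / 2 - \<alpha> T) \<longlonglongrightarrow> 0"
    by (simp add: f_def)
  have "(\<lambda>_. 1) \<in> O(S)"
    using S(1) by (rule landau_o.big_trans[rotated]) real_asymp
  then have "f \<in> o(S)"
    using f by (intro landau_o.small_big_trans[OF smalloI_tendsto]) auto
  then have "(\<lambda>T. 1 + (\<gamma> T - S T) / S T - f T / S T) \<longlonglongrightarrow> 1 + 0 - 0"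
    using landau_o.big_small_trans[OF \<gamma> ln_small]
    by (intro tendsto_intros smalloD_tendsto)
  moreover have "\<forall>\<^sub>F T in sequentially. 1 + (\<gamma> T - S T) / S T - f T / S T = (\<alpha> T + \<gamma> T + r T) / 2 / S T"
    using S(2) by eventually_elim (simp add: f_def field_simps)
  ultimately show "(\<lambda>T. (\<alpha> T + \<gamma> T + r T) / 2 / S T) \<longlonglongrightarrow> 1"
    by (simp add: tendsto_cong)
qed

lemma symmetric_2x2_eigenvalue_asymptotics:
  fixes M :: "nat \<Rightarrow> real^2^2" and v :: "real^2" and S :: "nat \<Rightarrow> real"
  assumes sym: "\<And>T. M T $ 1 $ 2 = M T $ 2 $ 1" and v: "v \<noteq> 0"
    and vv: "(\<lambda>T. v \<bullet> (M T *v v)) \<in> O(\<lambda>T. ln T)"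
    and vw: "(\<lambda>T. v \<bullet> (M T *v rot90 v)) \<in> O(\<lambda>T. ln T)"
    and ww: "(\<lambda>T. rot90 v \<bullet> (M T *v rot90 v) - S T * (v \<bullet> v)) \<in> O(\<lambda>T. ln T)"
    and S: "(\<lambda>T. real T) \<in> O(S)" "\<forall>\<^sub>F T in sequentially. S T > 0"
  shows "(\<lambda>T. lambda_min (M T) - v \<bullet> (M T *v v) / (v \<bullet> v)) \<longlonglongrightarrow> 0"
    and "(\<lambda>T. lambda_max (M T) / S T) \<longlonglongrightarrow> 1"
proof -
  define w where "w = rot90 v"
  define \<alpha> where "\<alpha> = (\<lambda>T. v \<bullet> (M T *v v) / (v \<bullet> v))"
  define \<beta> where "\<beta> = (\<lambda>T. v \<bullet> (M T *v w) / (v \<bullet> v))"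
  define \<gamma> where "\<gamma> = (\<lambda>T. w \<bullet> (M T *v w) / (v \<bullet> v))"
  have "\<alpha> \<in> O(\<lambda>T. ln T)" and "\<beta> \<in> O(\<lambda>T. ln T)"
    using vv vw by (simp_all add: \<alpha>_def \<beta>_def w_def divide_inverse)
  moreover have "\<gamma> T - S T = (w \<bullet> (M T *v w) - S T * (v \<bullet> v)) / (v \<bullet> v)" for T
    using v by (simp add: \<gamma>_def field_simps)
  then have "(\<lambda>T. \<gamma> T - S T) \<in> O(\<lambda>T. ln T)"
    using ww by (simp add: w_def divide_inverse)
  ultimately have limits:
    "(\<lambda>T. (\<alpha> T + \<gamma> T - sqrt ((\<alpha> T - \<gamma> T)\<^sup>2 + 4 * (\<beta> T)\<^sup>2)) / 2 - \<alpha> T) \<longlonglongrightarrow> 0"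
    "(\<lambda>T. (\<alpha> T + \<gamma> T + sqrt ((\<alpha> T - \<gamma> T)\<^sup>2 + 4 * (\<beta> T)\<^sup>2)) / 2 / S T) \<longlonglongrightarrow> 1"
    using S by (rule eigenvalue_formula_asymptotics)+
  have eigenvalues:
    "lambda_min (M T) = (\<alpha> T + \<gamma> T - sqrt ((\<alpha> T - \<gamma> T)\<^sup>2 + 4 * (\<beta> T)\<^sup>2)) / 2"
    "lambda_max (M T) = (\<alpha> T + \<gamma> T + sqrt ((\<alpha> T - \<gamma> T)\<^sup>2 + 4 * (\<beta> T)\<^sup>2)) / 2" for T
    unfolding \<alpha>_def \<beta>_def \<gamma>_def w_def by (rule lambda_min_max_symmetric_2x2[OF sym v])+
  show "(\<lambda>T. lambda_min (M T) - v \<bullet> (M T *v v) / (v \<bullet> v)) \<longlonglongrightarrow> 0"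
    using limits(1) unfolding eigenvalues \<alpha>_def .
  show "(\<lambda>T. lambda_max (M T) / S T) \<longlonglongrightarrow> 1"
    using limits(2) unfolding eigenvalues .
qed

definition moment_block :: "real^'n \<Rightarrow> real^'n \<Rightarrow> nat \<Rightarrow> real^'n^'n" where
  "moment_block l v T = info_block (moment_sum l v 2 T) (moment_sum l v 3 T) (moment_sum l v 4 T) l v"

lemma moment_block_sum_forms_bigo:
  fixes l :: "'i \<Rightarrow> real^2" and v :: "real^2" and A :: "nat \<Rightarrow> real^2^2"
  assumes v: "v \<noteq> 0" and ray: "\<And>i t. i \<in> I \<Longrightarrow> t \<ge> 1 \<Longrightarrow> l i + real t *\<^sub>R v \<noteq> 0"
  defines "A \<equiv> \<lambda>T. \<Sum>i\<in>I. moment_block (l i) v T" and "w \<equiv> rot90 v"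
  shows "(\<lambda>T. v \<bullet> (A T *v v)) \<in> O(\<lambda>T. ln T)"
    and "(\<lambda>T. v \<bullet> (A T *v w)) \<in> O(\<lambda>T. ln T)"
    and "(\<lambda>T. w \<bullet> (A T *v w) - (\<Sum>i\<in>I. moment_sum (l i) v 4 T * (v \<bullet> v)) * (v \<bullet> v))
           \<in> O(\<lambda>T. ln T)"
proof -
  have s2: "moment_sum (l i) v 2 \<in> O(\<lambda>T. ln T)" if "i \<in> I" for i
  proof -
    have "moment_sum (l i) v 2 \<in> O(\<lambda>_. 1)"
      using v ray[OF that] by (rule moment_sum_2_bigo)
    also have "(\<lambda>_. 1) \<in> O(\<lambda>T. ln (real T))"
      by real_asymp
    finally show ?thesis .
  qed
  have s3: "moment_sum (l i) v 3 \<in> O(\<lambda>T. ln T)" if "i \<in> I" for i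
    using v ray[OF that] by (rule moment_sum_3_bigo)
  show "(\<lambda>T. v \<bullet> (A T *v v)) \<in> O(\<lambda>T. ln T)"
    unfolding A_def inner_sum_matrix_vector moment_block_def info_block_forms_2
    by (auto intro!: big_sum_in_bigo s2)
  show "(\<lambda>T. v \<bullet> (A T *v w)) \<in> O(\<lambda>T. ln T)"
    unfolding A_def w_def inner_sum_matrix_vector moment_block_def info_block_forms_2
    by (auto intro!: big_sum_in_bigo sum_in_bigo s2 s3)
  show "(\<lambda>T. w \<bullet> (A T *v w) - (\<Sum>i\<in>I. moment_sum (l i) v 4 T * (v \<bullet> v)) * (v \<bullet> v))
          \<in> O(\<lambda>T. ln T)"
    unfolding A_def w_def inner_sum_matrix_vector moment_block_def info_block_forms_2
      sum_distrib_right sum_subtractf[symmetric]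
    by (auto simp: power2_eq_square mult.assoc intro!: big_sum_in_bigo sum_in_bigo s2 s3)
qed

lemma linear_bigo_sum_moment_sum_4:
  fixes l :: "'i \<Rightarrow> 'a::real_normed_vector"
  assumes I: "finite I" "i0 \<in> I" and v: "v \<noteq> 0"
    and ray: "\<And>t::nat. t \<ge> 1 \<Longrightarrow> l i0 + real t *\<^sub>R v \<noteq> 0"
  shows "(\<lambda>T. real T) \<in> O(\<lambda>T. \<Sum>i\<in>I. moment_sum (l i) v 4 T)"
    and "\<forall>\<^sub>F T in sequentially. (\<Sum>i\<in>I. moment_sum (l i) v 4 T) > 0"
proof -
  define U where "U = (norm (l i0) + norm v) ^ 4"
  have "norm (l i0) + norm v > 0"
    using v by (simp add: add_nonneg_pos)
  then have U: "U > 0"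
    by (simp add: U_def)
  have le: "real T / U \<le> (\<Sum>i\<in>I. moment_sum (l i) v 4 T)" for T
  proof -
    have "real T / U \<le> moment_sum (l i0) v 4 T"
      unfolding U_def using ray by (rule moment_sum_4_ge)
    also have "\<dots> \<le> (\<Sum>i\<in>I. moment_sum (l i) v 4 T)"
      using I by (intro member_le_sum) (auto simp: moment_sum_nonneg)
    finally show ?thesis .
  qed
  have "norm (real T) \<le> U * norm (\<Sum>i\<in>I. moment_sum (l i) v 4 T)" for T
    using le[of T] U sum_nonneg[of I "\<lambda>i. moment_sum (l i) v 4 T", OF moment_sum_nonneg]
    by (simp add: field_simps)
  then show "(\<lambda>T. real T) \<in> O(\<lambda>T. \<Sum>i\<in>I. moment_sum (l i) v 4 T)"
    by (intro bigoI[where c = U] always_eventually) simp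
  have "(\<Sum>i\<in>I. moment_sum (l i) v 4 T) > 0" if "T > 0" for T
    using order_less_le_trans[OF _ le] U that by simp
  then show "\<forall>\<^sub>F T in sequentially. (\<Sum>i\<in>I. moment_sum (l i) v 4 T) > 0"
    by (rule eventually_mono[OF eventually_gt_at_top[of 0]])
qed

lemma moment_block_sum_eigenvalue_asymptotics:
  fixes l :: "'i \<Rightarrow> real^2" and v :: "real^2" and I :: "'i set"
  assumes I: "finite I" "i0 \<in> I" and v: "v \<noteq> 0"
    and ray: "\<And>i t. i \<in> I \<Longrightarrow> t \<ge> 1 \<Longrightarrow> l i + real t *\<^sub>R v \<noteq> 0"
  defines "A \<equiv> \<lambda>T. \<Sum>i\<in>I. moment_block (l i) v T"
  shows "(\<lambda>T. lambda_min (A T) - (\<Sum>i\<in>I. moment_sum (l i) v 2 T * (l i \<bullet> rot90 v)\<^sup>2 / (v \<bullet> v)))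
           \<longlonglongrightarrow> 0"
    and "(\<lambda>T. lambda_max (A T) / (\<Sum>i\<in>I. moment_sum (l i) v 4 T * (v \<bullet> v))) \<longlonglongrightarrow> 1"
proof -
  have sym: "A T $ 1 $ 2 = A T $ 2 $ 1" for T
    by (simp add: A_def moment_block_def info_block_symmetric)
  have forms:
    "(\<lambda>T. v \<bullet> (A T *v v)) \<in> O(\<lambda>T. ln T)"
    "(\<lambda>T. v \<bullet> (A T *v rot90 v)) \<in> O(\<lambda>T. ln T)"
    "(\<lambda>T. rot90 v \<bullet> (A T *v rot90 v) - (\<Sum>i\<in>I. moment_sum (l i) v 4 T * (v \<bullet> v)) * (v \<bullet> v))
       \<in> O(\<lambda>T. ln T)"
    unfolding A_def using moment_block_sum_forms_bigo[of v I l] v ray by blast+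
  have linear: "(\<lambda>T. real T) \<in> O(\<lambda>T. \<Sum>i\<in>I. moment_sum (l i) v 4 T)"
    and pos: "\<forall>\<^sub>F T in sequentially. (\<Sum>i\<in>I. moment_sum (l i) v 4 T) > 0"
    using linear_bigo_sum_moment_sum_4[of I i0 v l] I v ray[OF I(2)] by blast+
  have "(\<lambda>T. real T) \<in> O(\<lambda>T. \<Sum>i\<in>I. moment_sum (l i) v 4 T * (v \<bullet> v))"
    using linear v by (simp add: sum_distrib_right[symmetric])
  moreover have "\<forall>\<^sub>F T in sequentially. (\<Sum>i\<in>I. moment_sum (l i) v 4 T * (v \<bullet> v)) > 0"
    using pos by eventually_elim (use v in \<open>simp add: sum_distrib_right[symmetric]\<close>)
  ultimately have limits:
    "(\<lambda>T. lambda_min (A T) - v \<bullet> (A T *v v) / (v \<bullet> v)) \<longlonglongrightarrow> 0"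
    "(\<lambda>T. lambda_max (A T) / (\<Sum>i\<in>I. moment_sum (l i) v 4 T * (v \<bullet> v))) \<longlonglongrightarrow> 1"
    using symmetric_2x2_eigenvalue_asymptotics[of A v, OF sym v forms] by blast+
  have "v \<bullet> (A T *v v) / (v \<bullet> v) = (\<Sum>i\<in>I. moment_sum (l i) v 2 T * (l i \<bullet> rot90 v)\<^sup>2 / (v \<bullet> v))"
    for T
    by (simp add: A_def inner_sum_matrix_vector sum_divide_distrib moment_block_def info_block_forms_2)
  with limits show
    "(\<lambda>T. lambda_min (A T) - (\<Sum>i\<in>I. moment_sum (l i) v 2 T * (l i \<bullet> rot90 v)\<^sup>2 / (v \<bullet> v)))
       \<longlonglongrightarrow> 0"
    "(\<lambda>T. lambda_max (A T) / (\<Sum>i\<in>I. moment_sum (l i) v 4 T * (v \<bullet> v))) \<longlonglongrightarrow> 1"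
    by simp_all
qed

theorem lemma6:
  fixes ob :: "nat \<Rightarrow> real^2" and x v :: "real^2" and Q :: nat
    and l :: "nat \<Rightarrow> real^2" and s :: "nat \<Rightarrow> nat \<Rightarrow> nat \<Rightarrow> real"
    and A :: "nat \<Rightarrow> real^2^2" and Pperp :: "real^2^2"
  assumes "Q \<ge> 1"
    and "v \<noteq> 0"
    and "\<forall>t::real. t \<ge> 1 \<longrightarrow> (\<forall>q\<in>{1..Q}. x + t *\<^sub>R v \<noteq> ob q)"
  defines "l \<equiv> (\<lambda>q. x - ob q)"
    and "s \<equiv> (\<lambda>T q n. \<Sum>t=1..T. real t ^ n / (norm (l q + real t *\<^sub>R v)) ^ 4)"
    and "Pperp \<equiv> mat 1 - (1 / (norm v)\<^sup>2) *\<^sub>R outer v v"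
    and "A \<equiv> (\<lambda>T. \<Sum>q=1..Q.
              s T q 2 *\<^sub>R ((l q \<bullet> l q) *\<^sub>R mat 1 - outer (l q) (l q))
            + s T q 3 *\<^sub>R ((2 * (v \<bullet> l q)) *\<^sub>R mat 1 - outer (l q) v - outer v (l q))
            + s T q 4 *\<^sub>R ((norm v)\<^sup>2 *\<^sub>R mat 1 - outer v v))"
  shows "((\<lambda>T. lambda_min (A T) - (\<Sum>q=1..Q. s T q 2 * (norm (Pperp *v l q))\<^sup>2))
            \<longlonglongrightarrow> 0)
       \<and> ((\<lambda>T. lambda_max (A T) / (\<Sum>q=1..Q. s T q 4 * (norm v)\<^sup>2)) \<longlonglongrightarrow> 1)"
proof -
  have ray: "l q + real t *\<^sub>R v \<noteq> 0" if "q \<in> {1..Q}" "t \<ge> 1" for q t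
  proof
    assume "l q + real t *\<^sub>R v = 0"
    then have "x + real t *\<^sub>R v = ob q"
      by (simp add: l_def algebra_simps)
    then show False
      using assms(3) that by force
  qed
  have "A = (\<lambda>T. \<Sum>q=1..Q. moment_block (l q) v T)"
    unfolding A_def s_def moment_block_def info_block_def moment_sum_def ..
  moreover have "s T q 2 * (norm (Pperp *v l q))\<^sup>2 = moment_sum (l q) v 2 T * (l q \<bullet> rot90 v)\<^sup>2 / (v \<bullet> v)"
    for T q
    using assms(2) by (simp add: s_def Pperp_def moment_sum_def norm_perp_projection_2)
  moreover have "s T q 4 * (norm v)\<^sup>2 = moment_sum (l q) v 4 T * (v \<bullet> v)" for T q
    by (simp add: s_def moment_sum_def power2_norm_eq_inner)
  ultimately show ?thesis
    using moment_block_sum_eigenvalue_asymptotics[of "{1..Q}" 1 v l] assms(1,2) ray by simp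
qed

end
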